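(* Let $k\ge 1$, $0\le r<k$ and $n\ge 1$ be integers, and let $$C_n(k,r,x)=\left(\binom{ki+r}{i-j}x^k+\binom{k(i+1)+r}{i-j+1}\right)_{i,j=0}^{n-1}.$$ Then $x^r\det C_n(k,r,x)=L^{(k)}_{kn+r}(x)$.
   Context: Binomial coefficients: for integers $m\ge 0$ and $j$, $\binom{m}{j}$ is the usual binomial coefficient, with $\binom{m}{j}=0$ if $j<0$ or $j>m$. For an integer $k\ge1$, the generalized Lucas polynomials $L^{(k)}_n(x)\in\mathbb{Z}[x]$ ($n\ge0$) are defined by $L^{(k)}_0(x)=k$, $L^{(k)}_n(x)=x^n$ for $0<n<k$, and $L^{(k)}_n(x)=xL^{(k)}_{n-1}(x)+L^{(k)}_{n-k}(x)$ for $n\ge k$; equivalently, for $n\ge1$, $L^{(k)}_n(x)=\sum_{j=0}^{\lfloor n/k\rfloor}\frac{n}{n-(k-1)j}\binom{n-(k-1)j}{j}x^{n-kj}$. *)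

theory Defs
  imports "HOL-Computational_Algebra.Polynomial" "Jordan_Normal_Form.Determinant"
begin

definition binom_int :: "nat \<Rightarrow> int \<Rightarrow> int" where
  "binom_int m j = (if j < 0 then 0 else int (m choose nat j))"

fun gen_lucas :: "nat \<Rightarrow> nat \<Rightarrow> int poly" where
  "gen_lucas k n =
     (if n = 0 then [:int k:]
      else if n < k then monom 1 n
      else if k = 0 then 0  \<comment> \<open>k = 0 is outside the definition's scope (k \<ge> 1)\<close>
      else pCons 0 (gen_lucas k (n - 1)) + gen_lucas k (n - k))"

definition C_mat :: "nat \<Rightarrow> nat \<Rightarrow> nat \<Rightarrow> int poly mat" where
  "C_mat k r n = mat n n (\<lambda>(i, j).
      smult (binom_int (k * i + r) (int i - int j)) (monom 1 k)
      + [: binom_int (k * (i + 1) + r) (int i - int j + 1) :])"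

end

theory Submission
  imports Defs
begin

text \<open>
  The matrix \<open>C\<^sub>m = C\<^sub>m(k,r,x)\<close> is lower Hessenberg with superdiagonal \<open>1\<close>, so expanding
  \<open>D\<^sub>m = det C\<^sub>m\<close> along the last row gives, by induction on \<open>m\<close>,
  \<open>\<Sum>j\<le>m. (-1)^(m-j) (km+r choose m-j) D\<^sub>j = x^(km)\<close>.
  On the Lucas side, the recurrence \<open>L\<^sub>n = x L\<^sub>n\<^sub>-\<^sub>1 + L\<^sub>n\<^sub>-\<^sub>k\<close> and Pascal's rule give
  \<open>\<Sum>i\<le>n. (-1)^i (n choose i) L\<^sub>n\<^sub>-\<^sub>k\<^sub>i = x^n\<close>, the boundary terms cancelling because
  \<open>(kq-1 choose q) = (k-1) (kq-1 choose q-1)\<close>. For \<open>n = km+r\<close> with \<open>r < k\<close> only the indices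
  \<open>n - ki = kj + r\<close> survive, so \<open>x^r D\<^sub>j\<close> and \<open>L\<^sub>k\<^sub>j\<^sub>+\<^sub>r\<close> solve the same unitriangular
  linear system and therefore coincide.
\<close>

lemma det_mat_delete_last_row_hessenberg:
  fixes f :: "nat \<Rightarrow> nat \<Rightarrow> 'a::idom"
  assumes superdiag: "\<And>i. f i (Suc i) = 1"
    and above_superdiag: "\<And>i j. Suc i < j \<Longrightarrow> f i j = 0"
    and "j \<le> m"
  shows "det (mat_delete (mat (Suc m) (Suc m) (\<lambda>(i, j). f i j)) m j) = det (mat j j (\<lambda>(i, j). f i j))"
proof -
  let ?A = "mat j j (\<lambda>(i, j). f i j)"
  let ?B = "mat (m - j) j (\<lambda>(a, b). f (a + j) b)"
  let ?U = "mat (m - j) (m - j) (\<lambda>(a, b). f (a + j) (Suc (b + j)))"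
  have blocks: "mat_delete (mat (Suc m) (Suc m) (\<lambda>(i, j). f i j)) m j = four_block_mat ?A (0\<^sub>m j (m - j)) ?B ?U"
    by (rule eq_matI) (use \<open>j \<le> m\<close> in \<open>auto simp: mat_delete_def intro!: above_superdiag\<close>)
  have "det ?U = prod_list (diag_mat ?U)"
    by (rule det_lower_triangular[of "m - j"]) (auto intro!: above_superdiag)
  also have "diag_mat ?U = replicate (m - j) 1"
    by (rule nth_equalityI) (auto simp: diag_mat_def superdiag)
  finally have "det ?U = 1" by simp
  then show ?thesis
    unfolding blocks by (subst det_four_block_mat_upper_right_zero[of ?A j _ "m - j"]) auto
qed

lemma det_hessenberg_last_row_expansion:
  fixes f :: "nat \<Rightarrow> nat \<Rightarrow> 'a::idom"
  assumes "\<And>i. f i (Suc i) = 1" and "\<And>i j. Suc i < j \<Longrightarrow> f i j = 0"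
  shows "det (mat (Suc m) (Suc m) (\<lambda>(i, j). f i j)) =
     (\<Sum>j\<le>m. (-1) ^ (m - j) * f m j * det (mat j j (\<lambda>(i, j). f i j)))"
proof -
  let ?M = "mat (Suc m) (Suc m) (\<lambda>(i, j). f i j)"
  have "det ?M = (\<Sum>j<Suc m. ?M $$ (m, j) * cofactor ?M m j)"
    by (rule laplace_expansion_row) auto
  also have "\<dots> = (\<Sum>j\<le>m. (-1) ^ (m - j) * f m j * det (mat j j (\<lambda>(i, j). f i j)))"
  proof (rule sum.cong)
    fix j assume "j \<in> {..m}"
    then have "(-1 :: 'a) ^ (m + j) = (-1) ^ (m - j)"
      by (metis (no_types) le_add_diff_inverse2 atMost_iff power_add mult_2 add.assoc
          power_minus1_even dvd_triv_left mult_1_right)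
    with \<open>j \<in> {..m}\<close> show "?M $$ (m, j) * cofactor ?M m j = (-1) ^ (m - j) * f m j * det (mat j j (\<lambda>(i, j). f i j))"
      by (simp add: cofactor_def det_mat_delete_last_row_hessenberg assms)
  qed (simp add: lessThan_Suc_atMost)
  finally show ?thesis .
qed

lemma unitriangular_system_unique:
  fixes u v :: "nat \<Rightarrow> 'a::comm_ring_1"
  assumes "\<And>m. (\<Sum>j\<le>m. a m j * u j) = (\<Sum>j\<le>m. a m j * v j)" and "\<And>m. a m m = 1"
  shows "u m = v m"
proof (induction m rule: less_induct)
  case (less m)
  then have "(\<Sum>j<m. a m j * u j) = (\<Sum>j<m. a m j * v j)"
    by (intro sum.cong) auto
  with assms(1)[of m] show ?case
    by (simp add: lessThan_Suc_atMost[symmetric] assms(2))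
qed

lemma alternating_binomial_sum_Suc:
  fixes g :: "nat \<Rightarrow> 'a::comm_ring_1"
  shows "(\<Sum>i\<le>Suc p. (-1) ^ i * of_nat (Suc p choose i) * g i) =
         (\<Sum>i\<le>p. (-1) ^ i * of_nat (p choose i) * (g i - g (Suc i)))"
proof -
  have shifted: "(\<Sum>i\<le>Suc p. (-1) ^ i * of_nat (q choose i) * g i) =
      g 0 - (\<Sum>i\<le>p. (-1) ^ i * of_nat (q choose Suc i) * g (Suc i))" for q
    by (subst sum.atMost_Suc_shift) (simp add: sum_negf)
  have "(\<Sum>i\<le>Suc p. (-1) ^ i * of_nat (Suc p choose i) * g i) =
      g 0 - (\<Sum>i\<le>p. (-1) ^ i * of_nat (p choose i) * g (Suc i))
          - (\<Sum>i\<le>p. (-1) ^ i * of_nat (p choose Suc i) * g (Suc i))"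
    unfolding shifted[of "Suc p"] by (simp add: ring_distribs sum.distrib)
  moreover have "(\<Sum>i\<le>p. (-1) ^ i * of_nat (p choose i) * g i) =
      g 0 - (\<Sum>i\<le>p. (-1) ^ i * of_nat (p choose Suc i) * g (Suc i))"
    using shifted[of p] by (simp add: binomial_eq_0)
  ultimately show ?thesis
    by (simp add: right_diff_distrib sum_subtractf)
qed

lemma choose_mult_minus_one:
  assumes "q \<ge> 1"
  shows "(k * q - 1 choose q) = (k - 1) * (k * q - 1 choose (q - 1))"
proof (cases "k \<ge> 2")
  case False
  then consider "k = 0" | "k = 1" by linarith
  then show ?thesis using assms by cases auto
next
  case True
  define a b where "a = q - 1" and "b = k * q - 1 - q"
  have "k * q \<ge> 2 * q" using True by simp
  moreover have "(k - 1) * q = k * q - q" by (simp add: diff_mult_distrib)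
  ultimately have kq: "k * q - 1 = Suc (a + b)" and q: "q = Suc a" and b: "Suc b = (k - 1) * q"
    using assms unfolding a_def b_def by linarith+
  have "Suc a * (Suc (a + b) choose Suc a) = Suc b * (Suc (a + b) choose a)"
    by (rule Suc_times_binomial_add)
  then have "q * (k * q - 1 choose q) = (k - 1) * q * (k * q - 1 choose (q - 1))"
    unfolding kq[symmetric] q[symmetric] b unfolding a_def .
  then show ?thesis using assms by (simp add: mult_ac)
qed

declare gen_lucas.simps [simp del]

lemma gen_lucas_0: "gen_lucas k 0 = of_nat k"
  by (simp add: gen_lucas.simps of_nat_poly)

lemma gen_lucas_pos:
  assumes "k \<ge> 1" "n \<ge> 1"
  shows "gen_lucas k n =
    (if n < k then [:0, 1:] ^ n else [:0, 1:] * gen_lucas k (n - 1) + gen_lucas k (n - k))"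
  using assms by (subst gen_lucas.simps) (simp add: monom_altdef)

text \<open>
  \<open>lucas_ext k\<close> extends \<open>L\<^sup>(\<^sup>k\<^sup>)\<close> by \<open>0\<close> to negative indices and replaces \<open>L\<^sub>0 = k\<close> by \<open>1\<close>;
  the recurrence \<open>L\<^sub>n = x L\<^sub>n\<^sub>-\<^sub>1 + L\<^sub>n\<^sub>-\<^sub>k\<close> then holds for all integers \<open>n\<close> up to the
  correction \<open>lucas_defect\<close>, supported on \<open>{0, k}\<close>.
\<close>
definition lucas_ext :: "nat \<Rightarrow> int \<Rightarrow> int poly" where
  "lucas_ext k m = (if m < 0 then 0 else if m = 0 then 1 else gen_lucas k (nat m))"

definition lucas_defect :: "nat \<Rightarrow> int \<Rightarrow> int poly" where
  "lucas_defect k m = (if m = 0 then 1 else 0) + (if m = int k then of_nat (k - 1) else 0)"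

lemma lucas_ext_of_nat: "n > 0 \<Longrightarrow> lucas_ext k (int n) = gen_lucas k n"
  by (simp add: lucas_ext_def)

lemma lucas_ext_rec:
  assumes "k \<ge> 1"
  shows "lucas_ext k m = [:0, 1:] * lucas_ext k (m - 1) + lucas_ext k (m - int k) + lucas_defect k m"
proof (cases "m \<le> 0")
  case True
  with assms show ?thesis by (auto simp: lucas_ext_def lucas_defect_def)
next
  case False
  define n where "n = nat m"
  with False have n: "m = int n" "n \<ge> 1" by auto
  consider "n < k" | "n = k" | "n > k" by linarith
  then show ?thesis
  proof cases
    case 1
    then show ?thesis using assms n gen_lucas_pos[of k n] gen_lucas_pos[of k "n - 1"]
      by (cases "n = 1") (auto simp: lucas_ext_def lucas_defect_def nat_diff_distrib' power_eq_if)
  next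
    case 2
    have "gen_lucas k (k - 1) = lucas_ext k (int k - 1)"
      using assms by (cases "k = 1") (auto simp: lucas_ext_def gen_lucas_0 nat_diff_distrib')
    moreover have "(of_nat k :: int poly) = 1 + of_nat (k - 1)"
      using assms by (simp add: of_nat_diff)
    ultimately show ?thesis using assms n 2 gen_lucas_pos[of k n]
      by (simp add: lucas_ext_def lucas_defect_def gen_lucas_0)
  next
    case 3
    then show ?thesis using assms n gen_lucas_pos[of k n]
      by (auto simp: lucas_ext_def lucas_defect_def nat_diff_distrib')
  qed
qed

lemma lucas_defect_at_multiple:
  assumes "k \<ge> 1" and q: "Suc p = k * q"
  shows "lucas_defect k (int (Suc p) - int k * int i) =
    (if i = q then 1 else 0) + (if i = q - 1 then of_nat (k - 1) else 0)"
proof -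
  have "q \<ge> 1" using q by (cases q) auto
  have "int (Suc p) - int k * int i = 0 \<longleftrightarrow> int (k * q) = int (k * i)"
    unfolding q by simp
  then have at_0: "int (Suc p) - int k * int i = 0 \<longleftrightarrow> i = q"
    using assms by (simp only: of_nat_eq_iff) auto
  have "int (Suc p) - int k * int i = int k \<longleftrightarrow> int (Suc p) = int (k * Suc i)"
    by (simp add: algebra_simps)
  also have "\<dots> \<longleftrightarrow> k * q = k * Suc i"
    unfolding q by (simp only: of_nat_eq_iff)
  also have "\<dots> \<longleftrightarrow> q = Suc i"
    using assms by (simp only: mult_cancel_left) simp
  also have "\<dots> \<longleftrightarrow> i = q - 1"
    using \<open>q \<ge> 1\<close> by auto
  finally show ?thesis
    by (simp only: lucas_defect_def at_0)
qed

lemma lucas_defect_not_multiple: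
  assumes "\<not> k dvd Suc p"
  shows "lucas_defect k (int (Suc p) - int k * int i) = 0"
proof -
  have "Suc p \<noteq> k * i" "Suc p \<noteq> k * Suc i" using assms by auto
  then have "int (Suc p) \<noteq> int (k * i)" "int (Suc p) \<noteq> int (k * Suc i)"
    by (simp_all only: of_nat_eq_iff) simp_all
  then show ?thesis by (simp add: lucas_defect_def algebra_simps)
qed

lemma alternating_binomial_lucas_defect_sum:
  assumes "k \<ge> 1"
  shows "(\<Sum>i\<le>p. (-1) ^ i * of_nat (p choose i) * lucas_defect k (int (Suc p) - int k * int i)) = 0"
proof (cases "k dvd Suc p")
  case True
  then obtain q where q: "Suc p = k * q" by (auto elim: dvdE)
  then have "q \<ge> 1" by (cases q) auto
  have "(\<Sum>i\<le>p. (-1) ^ i * of_nat (p choose i) * lucas_defect k (int (Suc p) - int k * int i)) =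
      (\<Sum>i\<le>p. (if i = q then (-1) ^ q * of_nat (p choose q) else 0) +
        (if i = q - 1 then (-1) ^ (q - 1) * of_nat (p choose (q - 1)) * of_nat (k - 1) else 0))"
    unfolding lucas_defect_at_multiple[OF assms q] using \<open>q \<ge> 1\<close> by (intro sum.cong) auto
  also have "\<dots> = (-1) ^ q * of_nat (p choose q) + (-1) ^ (q - 1) * of_nat (p choose (q - 1)) * of_nat (k - 1)"
  proof -
    have "q - 1 \<le> p" using q assms by (metis diff_le_mono le_add1 mult_le_mono1 mult_1 diff_Suc_1 order_trans)
    moreover have "(p choose q) = 0" if "\<not> q \<le> p" using that by (simp add: binomial_eq_0)
    ultimately show ?thesis by (simp add: sum.distrib)
  qed
  also have "\<dots> = 0"
  proof -
    have "(-1 :: int poly) ^ q = - ((-1) ^ (q - 1))" using \<open>q \<ge> 1\<close> by (cases q) auto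
    moreover have "p = k * q - 1" using q by simp
    ultimately show ?thesis
      using choose_mult_minus_one[OF \<open>q \<ge> 1\<close>, of k] by (simp add: mult_ac)
  qed
  finally show ?thesis .
next
  case False
  show ?thesis unfolding lucas_defect_not_multiple[OF False] by simp
qed

lemma alternating_binomial_lucas_sum:
  assumes "k \<ge> 1"
  shows "(\<Sum>i\<le>n. (-1) ^ i * of_nat (n choose i) * lucas_ext k (int n - int k * int i)) = [:0, 1:] ^ n"
proof (induction n)
  case 0
  then show ?case by (simp add: lucas_ext_def)
next
  case (Suc p)
  have step: "lucas_ext k (int (Suc p) - int k * int i) - lucas_ext k (int (Suc p) - int k * int (Suc i)) =
      [:0, 1:] * lucas_ext k (int p - int k * int i) + lucas_defect k (int (Suc p) - int k * int i)" for i
    using lucas_ext_rec[OF assms, of "int (Suc p) - int k * int i"] by (simp add: algebra_simps)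
  have "(\<Sum>i\<le>Suc p. (-1) ^ i * of_nat (Suc p choose i) * lucas_ext k (int (Suc p) - int k * int i)) =
      (\<Sum>i\<le>p. [:0, 1:] * ((-1) ^ i * of_nat (p choose i) * lucas_ext k (int p - int k * int i)) +
        (-1) ^ i * of_nat (p choose i) * lucas_defect k (int (Suc p) - int k * int i))"
    unfolding alternating_binomial_sum_Suc step by (intro sum.cong) (simp_all add: ring_distribs mult_ac)
  also have "\<dots> = [:0, 1:] * (\<Sum>i\<le>p. (-1) ^ i * of_nat (p choose i) * lucas_ext k (int p - int k * int i)) +
      (\<Sum>i\<le>p. (-1) ^ i * of_nat (p choose i) * lucas_defect k (int (Suc p) - int k * int i))"
    by (simp add: sum.distrib sum_distrib_left)
  also have "\<dots> = [:0, 1:] ^ Suc p"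
    unfolding Suc.IH alternating_binomial_lucas_defect_sum[OF assms] by simp
  finally show ?case .
qed

lemma alternating_binomial_lucas_sum_residue:
  assumes "k \<ge> 1" and "r < k"
  shows "(\<Sum>j\<le>m. (-1) ^ (m - j) * of_nat (k * m + r choose (m - j)) * lucas_ext k (int (k * j + r))) =
    [:0, 1:] ^ (k * m + r)"
proof -
  let ?n = "k * m + r"
  let ?f = "\<lambda>i. (-1) ^ i * of_nat (?n choose i) * lucas_ext k (int ?n - int k * int i)"
  have "(\<Sum>i\<le>?n. ?f i) = (\<Sum>i\<le>m. ?f i)"
  proof (rule sum.mono_neutral_right)
    show "{..m} \<subseteq> {..?n}"
      using assms by (metis atMost_subset_iff le_add1 mult_le_mono1 mult_1 order_trans)
    show "\<forall>i\<in>{..?n} - {..m}. ?f i = 0"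
    proof
      fix i assume "i \<in> {..?n} - {..m}"
      then have "k * Suc m \<le> k * i" by (intro mult_le_mono2) auto
      with \<open>r < k\<close> have "int ?n < int k * int i" by (simp flip: of_nat_mult)
      then show "?f i = 0" by (simp add: lucas_ext_def)
    qed
  qed simp
  also have "\<dots> = (\<Sum>j\<le>m. ?f (m - j))"
    using sum.atLeastAtMost_rev[of ?f 0 m] by (simp add: atMost_atLeast0)
  also have "\<dots> = (\<Sum>j\<le>m. (-1) ^ (m - j) * of_nat (?n choose (m - j)) * lucas_ext k (int (k * j + r)))"
    by (intro sum.cong) (auto simp: of_nat_diff algebra_simps diff_mult_distrib2)
  finally show ?thesis
    using alternating_binomial_lucas_sum[OF assms(1), of ?n] by simp
qed

definition C_entry :: "nat \<Rightarrow> nat \<Rightarrow> nat \<Rightarrow> nat \<Rightarrow> int poly" where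
  "C_entry k r i j = smult (binom_int (k * i + r) (int i - int j)) (monom 1 k)
      + [: binom_int (k * (i + 1) + r) (int i - int j + 1) :]"

lemma C_mat_eq: "C_mat k r n = mat n n (\<lambda>(i, j). C_entry k r i j)"
  unfolding C_mat_def C_entry_def by simp

lemma C_entry_superdiag: "C_entry k r i (Suc i) = 1"
  by (simp add: C_entry_def binom_int_def one_pCons)

lemma C_entry_above_superdiag: "Suc i < j \<Longrightarrow> C_entry k r i j = 0"
  by (simp add: C_entry_def binom_int_def)

lemma binom_int_of_nat: "binom_int n (int d) = int (n choose d)"
  by (simp add: binom_int_def)

lemma C_entry_lower:
  assumes "j \<le> m"
  shows "C_entry k r m j =
    of_nat (k * m + r choose (m - j)) * [:0, 1:] ^ k + of_nat (k * Suc m + r choose (Suc m - j))"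
proof -
  have "int m - int j = int (m - j)" "int (m - j) + 1 = int (Suc m - j)" "k * (m + 1) = k * Suc m"
    using assms by simp_all
  moreover have "smult (int c) (monom 1 k) = of_nat c * [:0, 1:] ^ k" "[:int c:] = of_nat c" for c
    by (simp_all add: monom_altdef of_nat_poly)
  ultimately show ?thesis
    unfolding C_entry_def by (simp only: binom_int_of_nat)
qed

lemma det_C_mat_Suc:
  "det (C_mat k r (Suc m)) = (\<Sum>j\<le>m. (-1) ^ (m - j) *
     (of_nat (k * m + r choose (m - j)) * [:0, 1:] ^ k + of_nat (k * Suc m + r choose (Suc m - j))) *
     det (C_mat k r j))"
  unfolding C_mat_eq
  by (subst det_hessenberg_last_row_expansion) (auto simp: C_entry_superdiag C_entry_above_superdiag C_entry_lower)

lemma alternating_binomial_det_C_mat_sum: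
  "(\<Sum>j\<le>m. (-1) ^ (m - j) * of_nat (k * m + r choose (m - j)) * det (C_mat k r j)) = [:0, 1:] ^ (k * m)"
proof (induction m)
  case 0
  then show ?case by (simp add: C_mat_def)
next
  case (Suc m)
  have "det (C_mat k r (Suc m)) = [:0, 1:] ^ k *
      (\<Sum>j\<le>m. (-1) ^ (m - j) * of_nat (k * m + r choose (m - j)) * det (C_mat k r j)) +
      (\<Sum>j\<le>m. (-1) ^ (m - j) * of_nat (k * Suc m + r choose (Suc m - j)) * det (C_mat k r j))"
    unfolding det_C_mat_Suc by (simp add: ring_distribs sum.distrib sum_distrib_left mult_ac)
  moreover have "(\<Sum>j\<le>Suc m. (-1) ^ (Suc m - j) * of_nat (k * Suc m + r choose (Suc m - j)) * det (C_mat k r j)) =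
      det (C_mat k r (Suc m)) -
      (\<Sum>j\<le>m. (-1) ^ (m - j) * of_nat (k * Suc m + r choose (Suc m - j)) * det (C_mat k r j))"
    by (simp add: Suc_diff_le sum_negf)
  ultimately show ?case
    by (simp add: Suc power_add)
qed

theorem theorem3:
  fixes k r n :: nat
  assumes "k \<ge> 1" and "r < k" and "n \<ge> 1"
  shows "monom 1 r * det (C_mat k r n) = gen_lucas k (k * n + r)"
proof -
  let ?a = "\<lambda>m j. (-1) ^ (m - j) * of_nat (k * m + r choose (m - j)) :: int poly"
  have "monom 1 r * det (C_mat k r n) = [:0, 1:] ^ r * det (C_mat k r n)"
    by (simp add: monom_altdef)
  also have "\<dots> = lucas_ext k (int (k * n + r))"
  proof (rule unitriangular_system_unique[where a = ?a and u = "\<lambda>j. [:0, 1:] ^ r * det (C_mat k r j)"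
        and v = "\<lambda>j. lucas_ext k (int (k * j + r))"])
    fix m
    have "(\<Sum>j\<le>m. ?a m j * ([:0, 1:] ^ r * det (C_mat k r j))) =
        [:0, 1:] ^ r * (\<Sum>j\<le>m. ?a m j * det (C_mat k r j))"
      by (simp add: sum_distrib_left mult_ac)
    also have "\<dots> = [:0, 1:] ^ (k * m + r)"
      unfolding alternating_binomial_det_C_mat_sum by (simp add: power_add mult.commute)
    also have "\<dots> = (\<Sum>j\<le>m. ?a m j * lucas_ext k (int (k * j + r)))"
      by (rule alternating_binomial_lucas_sum_residue[OF assms(1,2), symmetric])
    finally show "(\<Sum>j\<le>m. ?a m j * ([:0, 1:] ^ r * det (C_mat k r j))) = \<dots>" .
  qed simp
  also have "\<dots> = gen_lucas k (k * n + r)"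
    by (rule lucas_ext_of_nat) (use assms in simp)
  finally show ?thesis .
qed

end
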